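(* For each $\mathrm{X}\in\{\mathbf{O},\mathbf{SO},\mathbf{R}\}$, the $\mathrm{X}$-chase is hereditary: for any factbase $F$, any set of existential rules $\mathcal R$, any $\mathrm{X}$-chase derivation $\mathcal D$ from $F$ and $\mathcal R$, and any $F'\subseteq F$, the restriction $\mathcal D_{|F'}$ of $\mathcal D$ induced by $F'$ is an $\mathrm{X}$-chase derivation.
   Context: First-order setting with constants and variables, no function symbols; a factbase is a set of atoms; a homomorphism from $A$ to $B$ is a substitution $\pi$ with $\pi(A)\subseteq B$. An existential rule $R=(B,H)$ is $\forall\bar x\forall\bar y(B(\bar x,\bar y)\to\exists\bar z\,H(\bar x,\bar z))$; its frontier is $\bar x$. A trigger $(R,\pi)$ on $F$ has $\pi:B\to F$ a homomorphism; $\pi^s$ maps each existential variable $z$ to a fresh variable $z_{(R,\pi)}$; $F\cup\pi^s(H)$ is the immediate derivation. A derivation from $F$ and $\mathcal R$ is a (possibly infinite) sequence $D_0=(\emptyset,\emptyset,F)$, $D_i=(R_i,\pi_i,F_i)$, $F_i$ the immediate derivation from $F_{i-1}$ through $(R_i,\pi_i)$, triggers pairwise distinct. For a derivation with last factbase $F_n$, a trigger $(R,\pi)$ is: $\mathbf{O}$-applicable if $\pi:B\to F_n$ is a homomorphism; $\mathbf{SO}$-applicable if moreover no trigger $(R,\pi')$ already in the derivation has $\pi'$ equal to $\pi$ on the frontier of $R$; $\mathbf{R}$-applicable if $\pi:B\to F_n$ is a homomorphism not extendable to a homomorphism $B\cup H\to F_n$. An $\mathbf{O}$-chase derivation is any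 derivation; an $\mathbf{SO}$- (resp. $\mathbf{R}$-) chase derivation is one where each trigger is $\mathbf{SO}$- (resp. $\mathbf{R}$-) applicable on its prefix. For $G\subseteq F$, the restriction $\mathcal D_{|G}$ is the maximal derivation from $G$ and $\mathcal R$ whose trigger sequence is a subsequence of the trigger sequence of $\mathcal D$. *)

theory Defs
  imports Main "HOL-Library.Infinite_Set" "HOL-Library.Extended_Nat"
begin

datatype ('c,'x) rterm = RC 'c | RV 'x

type_synonym ('p,'c,'x) ratom = "'p \<times> ('c,'x) rterm list"

type_synonym ('p,'c,'x) rule = "('p,'c,'x) ratom set \<times> ('p,'c,'x) ratom set"

text \<open>Variables occurring in factbases: either base variables, or the fresh
  variable z_(R,pi) created for existential variable z by trigger (R,pi);
  pi is the homomorphism of the trigger, a partial map defined exactly on the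
  variables of the body of R.\<close>
datatype ('p,'c,'x,'v) fvar =
    Base 'v
  | Null 'x "('p,'c,'x) rule" "'x \<Rightarrow> ('p,'c,'x,'v) fterm option"
and ('p,'c,'x,'v) fterm = FC 'c | FV "('p,'c,'x,'v) fvar"

type_synonym ('p,'c,'x,'v) fatom = "'p \<times> ('p,'c,'x,'v) fterm list"
type_synonym ('p,'c,'x,'v) factbase = "('p,'c,'x,'v) fatom set"
type_synonym ('p,'c,'x,'v) trigger =
  "('p,'c,'x) rule \<times> ('x \<Rightarrow> ('p,'c,'x,'v) fterm option)"

fun rvars_term :: "('c,'x) rterm \<Rightarrow> 'x set" where
  "rvars_term (RC c) = {}"
| "rvars_term (RV x) = {x}"

definition rvars :: "('p,'c,'x) ratom set \<Rightarrow> 'x set" where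
  "rvars A = (\<Union>a\<in>A. \<Union>t\<in>set (snd a). rvars_term t)"

definition body :: "('p,'c,'x) rule \<Rightarrow> ('p,'c,'x) ratom set" where
  "body R = fst R"

definition head :: "('p,'c,'x) rule \<Rightarrow> ('p,'c,'x) ratom set" where
  "head R = snd R"

definition frontier :: "('p,'c,'x) rule \<Rightarrow> 'x set" where
  "frontier R = rvars (body R) \<inter> rvars (head R)"

fun subst_term :: "('x \<Rightarrow> ('p,'c,'x,'v) fterm) \<Rightarrow> ('c,'x) rterm \<Rightarrow> ('p,'c,'x,'v) fterm" where
  "subst_term \<sigma> (RC c) = FC c"
| "subst_term \<sigma> (RV x) = \<sigma> x"

definition subst_atom :: "('x \<Rightarrow> ('p,'c,'x,'v) fterm) \<Rightarrow> ('p,'c,'x) ratom \<Rightarrow> ('p,'c,'x,'v) fatom" where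
  "subst_atom \<sigma> a = (fst a, map (subst_term \<sigma>) (snd a))"

definition subst_set :: "('x \<Rightarrow> ('p,'c,'x,'v) fterm) \<Rightarrow> ('p,'c,'x) ratom set \<Rightarrow> ('p,'c,'x,'v) factbase" where
  "subst_set \<sigma> A = subst_atom \<sigma> ` A"

definition is_hom :: "('x \<Rightarrow> ('p,'c,'x,'v) fterm option) \<Rightarrow> ('p,'c,'x) ratom set \<Rightarrow> ('p,'c,'x,'v) factbase \<Rightarrow> bool" where
  "is_hom \<pi> B F \<longleftrightarrow> dom \<pi> = rvars B \<and> subst_set (\<lambda>x. the (\<pi> x)) B \<subseteq> F"

definition pi_safe :: "('p,'c,'x) rule \<Rightarrow> ('x \<Rightarrow> ('p,'c,'x,'v) fterm option) \<Rightarrow> 'x \<Rightarrow> ('p,'c,'x,'v) fterm" where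
  "pi_safe R \<pi> x = (if x \<in> rvars (body R) then the (\<pi> x) else FV (Null x R \<pi>))"

definition trig_output :: "('p,'c,'x,'v) trigger \<Rightarrow> ('p,'c,'x,'v) factbase" where
  "trig_output t = subst_set (pi_safe (fst t) (snd t)) (head (fst t))"

text \<open>A derivation from F is given by its length (possibly infinite) and the
  sequence of triggers trig 0, trig 1, ... (trig i is the trigger of D_(i+1)).
  fb F trig i is the factbase F_i.\<close>
primrec fb :: "('p,'c,'x,'v) factbase \<Rightarrow> (nat \<Rightarrow> ('p,'c,'x,'v) trigger) \<Rightarrow> nat \<Rightarrow> ('p,'c,'x,'v) factbase" where
  "fb F trig 0 = F"
| "fb F trig (Suc i) = fb F trig i \<union> trig_output (trig i)"

definition O_applicable :: "('p,'c,'x,'v) factbase \<Rightarrow> ('p,'c,'x,'v) trigger \<Rightarrow> bool" where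
  "O_applicable Fn t \<longleftrightarrow> is_hom (snd t) (body (fst t)) Fn"

definition SO_applicable :: "('p,'c,'x,'v) trigger set \<Rightarrow> ('p,'c,'x,'v) factbase \<Rightarrow> ('p,'c,'x,'v) trigger \<Rightarrow> bool" where
  "SO_applicable prev Fn t \<longleftrightarrow> O_applicable Fn t \<and>
     \<not> (\<exists>\<pi>'. (fst t, \<pi>') \<in> prev \<and> (\<forall>x\<in>frontier (fst t). \<pi>' x = snd t x))"

definition R_applicable :: "('p,'c,'x,'v) factbase \<Rightarrow> ('p,'c,'x,'v) trigger \<Rightarrow> bool" where
  "R_applicable Fn t \<longleftrightarrow> O_applicable Fn t \<and>
     \<not> (\<exists>\<sigma>. (\<forall>x\<in>rvars (body (fst t)). snd t x = Some (\<sigma> x)) \<and>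
            subst_set \<sigma> (body (fst t) \<union> head (fst t)) \<subseteq> Fn)"

datatype chase_kind = Oblivious | SemiOblivious | Restricted

fun applicable :: "chase_kind \<Rightarrow> ('p,'c,'x,'v) trigger set \<Rightarrow> ('p,'c,'x,'v) factbase \<Rightarrow> ('p,'c,'x,'v) trigger \<Rightarrow> bool" where
  "applicable Oblivious prev Fn t = O_applicable Fn t"
| "applicable SemiOblivious prev Fn t = SO_applicable prev Fn t"
| "applicable Restricted prev Fn t = R_applicable Fn t"

definition is_derivation :: "('p,'c,'x) rule set \<Rightarrow> ('p,'c,'x,'v) factbase \<Rightarrow> enat \<Rightarrow> (nat \<Rightarrow> ('p,'c,'x,'v) trigger) \<Rightarrow> bool" where
  "is_derivation RS F len trig \<longleftrightarrow>
     (\<forall>i. enat i < len \<longrightarrow> fst (trig i) \<in> RS \<and> O_applicable (fb F trig i) (trig i)) \<and>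
     (\<forall>i j. enat i < len \<longrightarrow> enat j < len \<longrightarrow> i \<noteq> j \<longrightarrow> trig i \<noteq> trig j)"

text \<open>X-chase derivation: each trigger is X-applicable on its prefix, whose last
  factbase is F_i and whose triggers are trig 0, ..., trig (i-1).\<close>
definition is_chase_derivation :: "chase_kind \<Rightarrow> ('p,'c,'x) rule set \<Rightarrow> ('p,'c,'x,'v) factbase \<Rightarrow> enat \<Rightarrow> (nat \<Rightarrow> ('p,'c,'x,'v) trigger) \<Rightarrow> bool" where
  "is_chase_derivation X RS F len trig \<longleftrightarrow> is_derivation RS F len trig \<and>
     (\<forall>i. enat i < len \<longrightarrow> applicable X (trig ` {..<i}) (fb F trig i) (trig i))"

text \<open>rfb G len trig i: last factbase of the restriction after scanning the first i
  triggers of D; a trigger of D is kept iff it is a trigger on the current factbase.\<close>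
primrec rfb :: "('p,'c,'x,'v) factbase \<Rightarrow> enat \<Rightarrow> (nat \<Rightarrow> ('p,'c,'x,'v) trigger) \<Rightarrow> nat \<Rightarrow> ('p,'c,'x,'v) factbase" where
  "rfb G len trig 0 = G"
| "rfb G len trig (Suc i) =
     (if enat i < len \<and> O_applicable (rfb G len trig i) (trig i)
      then rfb G len trig i \<union> trig_output (trig i) else rfb G len trig i)"

definition kept :: "('p,'c,'x,'v) factbase \<Rightarrow> enat \<Rightarrow> (nat \<Rightarrow> ('p,'c,'x,'v) trigger) \<Rightarrow> nat set" where
  "kept G len trig = {i. enat i < len \<and> O_applicable (rfb G len trig i) (trig i)}"

definition restr_len :: "('p,'c,'x,'v) factbase \<Rightarrow> enat \<Rightarrow> (nat \<Rightarrow> ('p,'c,'x,'v) trigger) \<Rightarrow> enat" where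
  "restr_len G len trig = (if finite (kept G len trig) then enat (card (kept G len trig)) else \<infinity>)"

definition restr_trig :: "('p,'c,'x,'v) factbase \<Rightarrow> enat \<Rightarrow> (nat \<Rightarrow> ('p,'c,'x,'v) trigger) \<Rightarrow> nat \<Rightarrow> ('p,'c,'x,'v) trigger" where
  "restr_trig G len trig j = trig (enumerate (kept G len trig) j)"

end

theory Submission
  imports Defs
begin

text \<open>Every restricted factbase is contained in the corresponding factbase
  of the original derivation, and the triggers applied before a kept trigger are among those
  applied before it originally. Since O-, SO- and R-applicability of a trigger whose body maps
  are preserved when both the factbase and the set of earlier triggers shrink, every kept
  trigger is applicable in the same sense as in the original derivation.\<close>

lemma applicable_antimono:
  assumes "applicable X P F t" and "P' \<subseteq> P" and "F' \<subseteq> F" and "O_applicable F' t"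
  shows "applicable X P' F' t"
  using assms by (cases X) (auto simp: SO_applicable_def R_applicable_def, blast)

lemma fb_eq_Union: "fb G t j = G \<union> (\<Union>k<j. trig_output (t k))"
  by (induction j) (auto simp: lessThan_Suc)

lemma rfb_eq_Union:
  "rfb G len trig i = G \<union> (\<Union>k\<in>{k\<in>kept G len trig. k < i}. trig_output (trig k))"
proof (induction i)
  case (Suc i)
  have "{k\<in>kept G len trig. k < Suc i} = {k\<in>kept G len trig. k < i} \<union>
      (if enat i < len \<and> O_applicable (rfb G len trig i) (trig i) then {i} else {})"
    by (auto simp: kept_def less_Suc_eq)
  with Suc show ?case by auto
qed simp

lemma rfb_subset_fb: "G \<subseteq> F \<Longrightarrow> rfb G len trig i \<subseteq> fb F trig i"
  by (induction i) auto

lemma enumerate_in_set_nat: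
  fixes K :: "nat set"
  assumes "finite K \<Longrightarrow> j < card K"
  shows "enumerate K j \<in> K"
  using assms by (cases "finite K") (auto intro: finite_enumerate_in_set enumerate_in_set)

lemma enumerate_mono_nat:
  fixes K :: "nat set"
  assumes "k < j" and "finite K \<Longrightarrow> j < card K"
  shows "enumerate K k < enumerate K j"
  using assms by (cases "finite K") (auto intro: finite_enumerate_mono enumerate_mono)

lemma enumerate_image_lessThan:
  fixes K :: "nat set"
  assumes j: "finite K \<Longrightarrow> j < card K"
  shows "enumerate K ` {..<j} = {i\<in>K. i < enumerate K j}"
proof (intro equalityI subsetI)
  fix i assume "i \<in> enumerate K ` {..<j}"
  then obtain k where "k < j" "i = enumerate K k" by auto
  with j show "i \<in> {i\<in>K. i < enumerate K j}"
    by (auto intro: enumerate_in_set_nat enumerate_mono_nat)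
next
  fix i assume i: "i \<in> {i\<in>K. i < enumerate K j}"
  then obtain k where k: "enumerate K k = i" and k_range: "finite K \<Longrightarrow> k < card K"
    using finite_enumerate_Ex[of K i] enumerate_Ex[of K i] by blast
  have "k < j"
  proof (rule ccontr)
    assume "\<not> k < j"
    then have "enumerate K j \<le> enumerate K k"
      using k_range enumerate_mono_nat[of j k K] by (cases "j = k") auto
    with i k show False by auto
  qed
  with k show "i \<in> enumerate K ` {..<j}" by auto
qed

lemma enat_less_restr_len_iff:
  "enat j < restr_len G len trig \<longleftrightarrow>
     (finite (kept G len trig) \<longrightarrow> j < card (kept G len trig))"
  by (simp add: restr_len_def)

lemma restr_trig_kept:
  assumes "enat j < restr_len G len trig"
  shows "enumerate (kept G len trig) j \<in> kept G len trig"
  using assms by (auto simp: enat_less_restr_len_iff intro: enumerate_in_set_nat)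

lemma fb_restr_trig:
  assumes "enat j < restr_len G len trig"
  shows "fb G (restr_trig G len trig) j = rfb G len trig (enumerate (kept G len trig) j)"
proof -
  let ?e = "enumerate (kept G len trig)"
  have "fb G (restr_trig G len trig) j = G \<union> (\<Union>i\<in>?e ` {..<j}. trig_output (trig i))"
    by (simp add: fb_eq_Union restr_trig_def)
  also have "\<dots> = rfb G len trig (?e j)"
    using assms by (simp add: rfb_eq_Union enumerate_image_lessThan enat_less_restr_len_iff)
  finally show ?thesis .
qed

lemma restr_trig_image_lessThan:
  assumes "enat j < restr_len G len trig"
  shows "restr_trig G len trig ` {..<j} \<subseteq> trig ` {..<enumerate (kept G len trig) j}"
  using assms by (auto simp: restr_trig_def enat_less_restr_len_iff intro: enumerate_mono_nat)

lemma is_derivation_restr: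
  assumes "is_derivation RS F len trig"
  shows "is_derivation RS G (restr_len G len trig) (restr_trig G len trig)"
  unfolding is_derivation_def
proof (intro conjI allI impI)
  fix j assume j: "enat j < restr_len G len trig"
  then have "enumerate (kept G len trig) j \<in> kept G len trig"
    by (rule restr_trig_kept)
  with assms j show "fst (restr_trig G len trig j) \<in> RS"
    and "O_applicable (fb G (restr_trig G len trig) j) (restr_trig G len trig j)"
    by (auto simp: is_derivation_def kept_def restr_trig_def fb_restr_trig)
next
  fix i j
  assume i: "enat i < restr_len G len trig" and j: "enat j < restr_len G len trig"
    and "i \<noteq> j"
  then have "enumerate (kept G len trig) i \<noteq> enumerate (kept G len trig) j"
    by (metis enat_less_restr_len_iff enumerate_mono_nat less_irrefl nat_neq_iff)
  with assms restr_trig_kept[OF i] restr_trig_kept[OF j]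
  show "restr_trig G len trig i \<noteq> restr_trig G len trig j"
    by (auto simp: is_derivation_def kept_def restr_trig_def)
qed

theorem proposition3:
  fixes X :: chase_kind
    and RS :: "('p,'c,'x) rule set"
    and F F' :: "('p,'c,'x,'v) factbase"
    and len :: enat
    and trig :: "nat \<Rightarrow> ('p,'c,'x,'v) trigger"
  assumes "is_chase_derivation X RS F len trig"
    and "F' \<subseteq> F"
  shows "is_chase_derivation X RS F' (restr_len F' len trig) (restr_trig F' len trig)"
proof -
  have "applicable X (restr_trig F' len trig ` {..<j}) (fb F' (restr_trig F' len trig) j)
      (restr_trig F' len trig j)" if j: "enat j < restr_len F' len trig" for j
  proof -
    define i where "i = enumerate (kept F' len trig) j"
    have "enat i < len" and O_app: "O_applicable (rfb F' len trig i) (trig i)"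
      using restr_trig_kept[OF j] by (auto simp: i_def kept_def)
    then have "applicable X (trig ` {..<i}) (fb F trig i) (trig i)"
      using assms(1) by (simp add: is_chase_derivation_def)
    then have "applicable X (restr_trig F' len trig ` {..<j}) (rfb F' len trig i) (trig i)"
      using restr_trig_image_lessThan[OF j] rfb_subset_fb[OF assms(2)] O_app
      unfolding i_def by (rule applicable_antimono)
    then show ?thesis
      by (simp add: fb_restr_trig[OF j] restr_trig_def i_def)
  qed
  with assms(1) show ?thesis
    by (auto simp: is_chase_derivation_def intro: is_derivation_restr)
qed

end
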